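(* Let $\sigma,\tau,\theta,\eta\in\mathbb{R}$ and $q\in(-1,1]$. Define $\lambda_0=0$ and $\lambda_{n+1}=\frac{1+q\lambda_n}{1-\sigma\tau\lambda_n}$ for $n\ge 0$, and assume that this sequence is well defined (i.e. $1-\sigma\tau\lambda_n\neq 0$ for all $n\ge0$) and that $\lambda_n\neq 0$ for all $n\ge 1$. Let $(\alpha_n)_{n\ge0},(\beta_n)_{n\ge0},(\gamma_n)_{n\ge0},(\delta_n)_{n\ge0},(\varepsilon_n)_{n\ge1},(\varphi_n)_{n\ge1}$ be real sequences satisfying the system (E1)–(E5) described in the context, with initial conditions $\alpha_0=\gamma_0=\delta_0=\varphi_1=0$, $\beta_0=\varepsilon_1=1$, and such that $(\alpha_n,\beta_n)\neq(0,0)$ for all $n\ge0$ and $(\varepsilon_n,\varphi_n)\neq(0,0)$ for all $n\ge1$. Then $\alpha_n=\sigma\lambda_n\beta_n$ for all $n\ge0$ and $\varphi_n=\tau\lambda_{n-1}\varepsilon_n$ for all $n\ge1$.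
   Context: The system (E1)–(E5) is: (E1) for $n\ge0$: $\tau\alpha_n\alpha_{n+1}+q\alpha_n\beta_{n+1}+\sigma\beta_n\beta_{n+1}=\alpha_{n+1}\beta_n$; (E2) for $n\ge2$: $\tau\varepsilon_{n-1}\varepsilon_n+q\varepsilon_n\varphi_{n-1}+\sigma\varphi_n\varphi_{n-1}=\varepsilon_{n-1}\varphi_n$; (E3) for $n\ge0$: $\theta\alpha_n+\eta\beta_n+\tau\alpha_n(\gamma_n+\gamma_{n+1})+\sigma\beta_n(\delta_n+\delta_{n+1})+q(\alpha_n\delta_{n+1}+\beta_n\gamma_n)=\beta_n\gamma_{n+1}+\alpha_n\delta_n$; (E4) for $n\ge1$: $\theta\varepsilon_n+\eta\varphi_n+\tau\varepsilon_n(\gamma_n+\gamma_{n-1})+\sigma\varphi_n(\delta_{n-1}+\delta_n)+q(\varphi_n\gamma_n+\delta_{n-1}\varepsilon_n)=\varepsilon_n\delta_n+\varphi_n\gamma_{n-1}$; (E5) for $n\ge1$: $1+\theta\gamma_n+\eta\delta_n+\tau\gamma_n^2+\sigma\delta_n^2+\tau(\alpha_{n-1}\varepsilon_n+\alpha_n\varepsilon_{n+1})+\sigma(\varphi_n\beta_{n-1}+\beta_n\varphi_{n+1})+q(\gamma_n\delta_n+\beta_{n-1}\varepsilon_n+\alpha_n\varphi_{n+1})=\gamma_n\delta_n+\beta_n\varepsilon_{n+1}+\varphi_n\alpha_{n-1}$. *)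

theory Defs
  imports Complex_Main
begin

primrec lam :: "real \<Rightarrow> real \<Rightarrow> real \<Rightarrow> nat \<Rightarrow> real" where
  "lam q \<sigma> \<tau> 0 = 0"
| "lam q \<sigma> \<tau> (Suc n) = (1 + q * lam q \<sigma> \<tau> n) / (1 - \<sigma> * \<tau> * lam q \<sigma> \<tau> n)"

end

theory Submission
  imports Defs
begin

text \<open>Both identities come from the first-order equations (E1) and (E2) alone. Dividing (E1) by
  \<open>\<beta>\<^sub>n\<close> shows that the ratio \<open>\<alpha>\<^sub>n / (\<sigma> \<beta>\<^sub>n)\<close> obeys the Moebius recursion defining \<open>\<lambda>\<close>, and
  \<open>\<beta>\<^sub>n \<noteq> 0\<close> propagates because \<open>\<alpha>\<^sub>n = \<sigma> \<lambda>\<^sub>n \<beta>\<^sub>n\<close> would vanish together with \<open>\<beta>\<^sub>n\<close>. Equation (E2) is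
  (E1) for the shifted pair \<open>(\<phi>\<^sub>n\<^sub>+\<^sub>1, \<epsilon>\<^sub>n\<^sub>+\<^sub>1)\<close> with \<open>\<sigma>\<close> and \<open>\<tau>\<close> exchanged, and \<open>\<lambda>\<close> depends on
  \<open>\<sigma>\<close> and \<open>\<tau>\<close> only through \<open>\<sigma>\<tau>\<close>.\<close>

lemma lam_swap: "lam q \<tau> \<sigma> = lam q \<sigma> \<tau>"
proof
  show "lam q \<tau> \<sigma> n = lam q \<sigma> \<tau> n" for n
    by (induction n) (simp_all add: mult.commute)
qed

lemma bilinear_recurrence_eq_lam:
  fixes a b :: "nat \<Rightarrow> real"
  assumes wd: "\<And>n. 1 - \<sigma> * \<tau> * lam q \<sigma> \<tau> n \<noteq> 0"
    and rec: "\<And>n. \<tau> * a n * a (n+1) + q * a n * b (n+1) + \<sigma> * b n * b (n+1) = a (n+1) * b n"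
    and a0: "a 0 = 0"
    and nz: "\<And>n. (a n, b n) \<noteq> (0, 0)"
  shows "a n = \<sigma> * lam q \<sigma> \<tau> n * b n"
proof (induction n)
  case 0
  show ?case using a0 by simp
next
  case (Suc n)
  let ?L = "lam q \<sigma> \<tau> n"
  have "b n \<noteq> 0" using Suc nz[of n] by auto
  moreover have "b n * (a (Suc n) * (1 - \<sigma> * \<tau> * ?L) - \<sigma> * b (Suc n) * (1 + q * ?L)) = 0"
    using rec[of n] Suc by (simp add: algebra_simps)
  ultimately have "a (Suc n) * (1 - \<sigma> * \<tau> * ?L) = \<sigma> * b (Suc n) * (1 + q * ?L)"
    by simp
  then show ?case using wd[of n] by (simp add: field_simps)
qed

theorem mainTheorem1:
  fixes \<sigma> \<tau> \<theta> \<eta> q :: real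
    and \<alpha> \<beta> \<gamma> \<delta> \<epsilon> \<phi> :: "nat \<Rightarrow> real"
  assumes q: "-1 < q" "q \<le> 1"
    and wd: "\<And>n. 1 - \<sigma> * \<tau> * lam q \<sigma> \<tau> n \<noteq> 0"
    and lam_nz: "\<And>n. n \<ge> 1 \<Longrightarrow> lam q \<sigma> \<tau> n \<noteq> 0"
    and E1: "\<And>n. \<tau> * \<alpha> n * \<alpha> (n+1) + q * \<alpha> n * \<beta> (n+1) + \<sigma> * \<beta> n * \<beta> (n+1)
                  = \<alpha> (n+1) * \<beta> n"
    and E2: "\<And>n. n \<ge> 2 \<Longrightarrow> \<tau> * \<epsilon> (n-1) * \<epsilon> n + q * \<epsilon> n * \<phi> (n-1) + \<sigma> * \<phi> n * \<phi> (n-1)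
                  = \<epsilon> (n-1) * \<phi> n"
    and E3: "\<And>n. \<theta> * \<alpha> n + \<eta> * \<beta> n + \<tau> * \<alpha> n * (\<gamma> n + \<gamma> (n+1))
                  + \<sigma> * \<beta> n * (\<delta> n + \<delta> (n+1)) + q * (\<alpha> n * \<delta> (n+1) + \<beta> n * \<gamma> n)
                  = \<beta> n * \<gamma> (n+1) + \<alpha> n * \<delta> n"
    and E4: "\<And>n. n \<ge> 1 \<Longrightarrow> \<theta> * \<epsilon> n + \<eta> * \<phi> n + \<tau> * \<epsilon> n * (\<gamma> n + \<gamma> (n-1))
                  + \<sigma> * \<phi> n * (\<delta> (n-1) + \<delta> n) + q * (\<phi> n * \<gamma> n + \<delta> (n-1) * \<epsilon> n)
                  = \<epsilon> n * \<delta> n + \<phi> n * \<gamma> (n-1)"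
    and E5: "\<And>n. n \<ge> 1 \<Longrightarrow> 1 + \<theta> * \<gamma> n + \<eta> * \<delta> n + \<tau> * (\<gamma> n)^2 + \<sigma> * (\<delta> n)^2
                  + \<tau> * (\<alpha> (n-1) * \<epsilon> n + \<alpha> n * \<epsilon> (n+1))
                  + \<sigma> * (\<phi> n * \<beta> (n-1) + \<beta> n * \<phi> (n+1))
                  + q * (\<gamma> n * \<delta> n + \<beta> (n-1) * \<epsilon> n + \<alpha> n * \<phi> (n+1))
                  = \<gamma> n * \<delta> n + \<beta> n * \<epsilon> (n+1) + \<phi> n * \<alpha> (n-1)"
    and init: "\<alpha> 0 = 0" "\<gamma> 0 = 0" "\<delta> 0 = 0" "\<phi> 1 = 0" "\<beta> 0 = 1" "\<epsilon> 1 = 1"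
    and nz1: "\<And>n. (\<alpha> n, \<beta> n) \<noteq> (0, 0)"
    and nz2: "\<And>n. n \<ge> 1 \<Longrightarrow> (\<epsilon> n, \<phi> n) \<noteq> (0, 0)"
  shows "(\<forall>n. \<alpha> n = \<sigma> * lam q \<sigma> \<tau> n * \<beta> n)
       \<and> (\<forall>n\<ge>1. \<phi> n = \<tau> * lam q \<sigma> \<tau> (n-1) * \<epsilon> n)"
proof (intro conjI allI impI)
  show "\<alpha> n = \<sigma> * lam q \<sigma> \<tau> n * \<beta> n" for n
    using bilinear_recurrence_eq_lam[OF wd E1 init(1) nz1] .
next
  fix n :: nat
  assume "n \<ge> 1"
  then obtain m where m: "n = Suc m" by (cases n) auto
  have wd': "1 - \<tau> * \<sigma> * lam q \<tau> \<sigma> k \<noteq> 0" for k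
    using wd[of k] by (simp add: lam_swap mult.commute)
  have E2': "\<sigma> * \<phi> (Suc k) * \<phi> (Suc (k + 1)) + q * \<phi> (Suc k) * \<epsilon> (Suc (k + 1))
      + \<tau> * \<epsilon> (Suc k) * \<epsilon> (Suc (k + 1)) = \<phi> (Suc (k + 1)) * \<epsilon> (Suc k)" for k
    using E2[of "Suc (Suc k)"] by (simp add: algebra_simps)
  have nz2': "(\<phi> (Suc k), \<epsilon> (Suc k)) \<noteq> (0, 0)" for k
    using nz2[of "Suc k"] by auto
  have "\<phi> (Suc m) = \<tau> * lam q \<tau> \<sigma> m * \<epsilon> (Suc m)"
    using bilinear_recurrence_eq_lam[where a = "\<lambda>k. \<phi> (Suc k)" and b = "\<lambda>k. \<epsilon> (Suc k)",
        OF wd' E2' _ nz2'] init(4) by simp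
  then show "\<phi> n = \<tau> * lam q \<sigma> \<tau> (n-1) * \<epsilon> n"
    using m by (simp add: lam_swap)
qed

end
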